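(* For $n\ge1$ and real $\theta$ with $1\le\theta\le n/2$, let $\mathcal V=\mathrm{span}\{|+\rangle^{\otimes n}\}$. Then $$\big\|\Pi_{\mathcal V^\perp}H^\theta_1|+\rangle^{\otimes n}\big\|^2=\langle+^{n}|(H^\theta_1)^2|+^{n}\rangle-\langle+^{n}|H^\theta_1|+^{n}\rangle^2\le2\theta^2e^{-(n/2-\theta)^2/n}.$$
   Context: On $n$ qubits with computational basis $|j\rangle$, $j\in\{0,\dots,2^n-1\}$: $h(j)$ is the Hamming weight of $j$, $h_\theta(j)=\min(\theta,h(j))$, and $H^\theta_1=\sum_j h_\theta(j)|j\rangle\langle j|$. $|+^n\rangle=|+\rangle^{\otimes n}$. *)

theory Defs
  imports Complex_Main
begin

text \<open>States on n qubits are represented as amplitude functions nat => complex,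
  indexed by the computational basis j < 2^n (values outside are ignored).\<close>

definition hamming :: "nat \<Rightarrow> nat" where
  "hamming j = card {i. bit j i}"

definition h_theta :: "real \<Rightarrow> nat \<Rightarrow> real" where
  "h_theta \<theta> j = min \<theta> (real (hamming j))"

definition H1 :: "real \<Rightarrow> (nat \<Rightarrow> complex) \<Rightarrow> (nat \<Rightarrow> complex)" where
  "H1 \<theta> \<psi> = (\<lambda>j. complex_of_real (h_theta \<theta> j) * \<psi> j)"

definition plus_state :: "nat \<Rightarrow> nat \<Rightarrow> complex" where
  "plus_state n = (\<lambda>j. if j < 2 ^ n then complex_of_real (1 / sqrt (2 ^ n)) else 0)"

definition qinner :: "nat \<Rightarrow> (nat \<Rightarrow> complex) \<Rightarrow> (nat \<Rightarrow> complex) \<Rightarrow> complex" where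
  "qinner n \<phi> \<psi> = (\<Sum>j<2 ^ n. cnj (\<phi> j) * \<psi> j)"

definition qnorm :: "nat \<Rightarrow> (nat \<Rightarrow> complex) \<Rightarrow> real" where
  "qnorm n \<psi> = sqrt (\<Sum>j<2 ^ n. (cmod (\<psi> j))\<^sup>2)"

definition proj_perp :: "nat \<Rightarrow> (nat \<Rightarrow> complex) \<Rightarrow> (nat \<Rightarrow> complex) \<Rightarrow> (nat \<Rightarrow> complex)" where
  "proj_perp n v \<psi> = (\<lambda>j. \<psi> j - (qinner n v \<psi> / qinner n v v) * v j)"

end

theory Submission
  imports Defs "HOL-Probability.Hoeffding"
begin

text \<open>Projecting \<open>H |+^n>\<close> away from \<open>|+^n>\<close> leaves the amplitudes \<open>(h_theta(j) - mu) / sqrt(2^n)\<close>,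
  where \<open>mu\<close> is the mean of \<open>h_theta\<close> over all \<open>2^n\<close> bit strings; so the squared norm is the
  variance of \<open>h_theta\<close> under the uniform distribution, which is the identity. The variance is
  at most the mean square distance to \<open>theta\<close>. As \<open>h_theta(j) = theta\<close> whenever \<open>h(j) \<ge> theta\<close>,
  that distance is at most \<open>theta^2 exp(l (theta - h(j)))\<close> for every \<open>l \<ge> 0\<close>. The Hamming weight
  of a uniform bit string is a sum of \<open>n\<close> fair coins, so Hoeffding's lemma with
  \<open>l = 4 (n/2 - theta) / n\<close> gives the Chernoff bound \<open>theta^2 exp(-2 (n/2 - theta)^2 / n)\<close>,
  stronger than claimed.\<close>

lemma finite_bits_nat: "finite {i. bit (m::nat) i}"
proof (rule finite_subset)
  show "{i. bit m i} \<subseteq> {..<m}"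
    by (auto simp: bit_iff_odd) (metis div_less even_zero less_exp linorder_not_le order_le_less_trans)
qed simp

lemma hamming_rec: "hamming m = m mod 2 + hamming (m div 2)"
proof -
  have "{i. bit m i} = (if odd m then insert 0 else id) (Suc ` {i. bit (m div 2) i})"
    by (auto simp: image_iff bit_0 bit_Suc elim: bit_imp_possible_bit) (metis bit_0 bit_Suc not0_implies_Suc)+
  then show ?thesis
    unfolding hamming_def using finite_bits_nat[of "m div 2"]
    by (auto simp: card_image odd_iff_mod_2_eq_one)
qed

lemma sum_lessThan_double:
  "(\<Sum>j<2 * k. g j) = (\<Sum>m<k. g (2 * m) + g (Suc (2 * m)))"
  by (induction k) (simp_all add: add.assoc)

lemma sum_power_hamming:
  fixes c :: "'a::comm_semiring_1"
  shows "(\<Sum>j<2 ^ n. c ^ hamming j) = (1 + c) ^ n"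
proof (induction n)
  case 0
  then show ?case by (simp add: hamming_def)
next
  case (Suc n)
  have halves: "hamming (2 * m) = hamming m" "hamming (Suc (2 * m)) = Suc (hamming m)" for m
    using hamming_rec[of "2 * m"] hamming_rec[of "Suc (2 * m)"] by simp_all
  have "(\<Sum>j<2 ^ Suc n. c ^ hamming j) = (\<Sum>m<2 ^ n. c ^ hamming (2 * m) + c ^ hamming (Suc (2 * m)))"
    by (simp add: sum_lessThan_double)
  also have "\<dots> = (1 + c) * (\<Sum>m<2 ^ n. c ^ hamming m)"
    by (simp only: halves) (simp add: sum.distrib sum_distrib_left distrib_right)
  finally show ?case using Suc by simp
qed

lemma hoeffding_fair_coin:
  fixes l :: real
  assumes "l \<ge> 0"
  shows "(1 + exp (-l)) / 2 \<le> exp (l\<^sup>2 / 8 - l / 2)"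
proof -
  have "ln ((1 + exp l) / 2) \<le> l / 2 + l\<^sup>2 / 8"
    using Hoeffdings_lemma_aux[of l "1/2"] assms by (simp add: field_simps)
  then have "(1 + exp l) / 2 \<le> exp (l / 2 + l\<^sup>2 / 8)"
    by (smt (verit) exp_gt_zero exp_le_cancel_iff exp_ln)
  then have "exp (-l) * ((1 + exp l) / 2) \<le> exp (-l) * exp (l / 2 + l\<^sup>2 / 8)"
    by simp
  also have "\<dots> = exp (l\<^sup>2 / 8 - l / 2)"
    by (simp flip: exp_add)
  also have "exp (-l) * ((1 + exp l) / 2) = (1 + exp (-l)) / 2"
    by (simp add: field_simps exp_minus)
  finally show ?thesis .
qed

lemma sum_sq_dev:
  fixes f :: "'a \<Rightarrow> real" and c :: real
  shows "(\<Sum>x\<in>A. (f x - c)\<^sup>2) = (\<Sum>x\<in>A. (f x)\<^sup>2) - 2 * c * sum f A + card A * c\<^sup>2"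
proof -
  have "(f x - c)\<^sup>2 = (f x)\<^sup>2 - (2 * c) * f x + c\<^sup>2" for x
    by (simp add: power2_eq_square algebra_simps)
  then show ?thesis
    by (simp add: sum.distrib sum_subtractf flip: sum_distrib_left)
qed

lemma sum_sq_dev_mean:
  fixes f :: "'a \<Rightarrow> real"
  shows "(\<Sum>x\<in>A. (f x - sum f A / card A)\<^sup>2) = (\<Sum>x\<in>A. (f x)\<^sup>2) - (sum f A)\<^sup>2 / card A"
  unfolding sum_sq_dev by (cases "card A = 0") (simp_all add: field_simps power2_eq_square)

lemma sum_sq_dev_mean_le:
  fixes f :: "'a \<Rightarrow> real" and c :: real
  shows "(\<Sum>x\<in>A. (f x - sum f A / card A)\<^sup>2) \<le> (\<Sum>x\<in>A. (f x - c)\<^sup>2)"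
proof (cases "card A = 0")
  case False
  have "(\<Sum>x\<in>A. (f x - c)\<^sup>2) - (\<Sum>x\<in>A. (f x - sum f A / card A)\<^sup>2) = (card A * c - sum f A)\<^sup>2 / card A"
    using False unfolding sum_sq_dev by (simp add: field_simps power2_eq_square)
  then show ?thesis
    by (smt (verit) divide_nonneg_nonneg of_nat_0_le_iff zero_le_power2)
qed (auto simp: sum_sq_dev card_eq_0_iff)

lemma sq_dist_h_theta_le:
  assumes "\<theta> \<ge> 0" and "l \<ge> 0"
  shows "(h_theta \<theta> j - \<theta>)\<^sup>2 \<le> \<theta>\<^sup>2 * exp (l * \<theta>) * exp (-l) ^ hamming j"
proof (cases "real (hamming j) \<ge> \<theta>")
  case True
  then show ?thesis by (simp add: h_theta_def)
next
  case False
  then have "(h_theta \<theta> j - \<theta>)\<^sup>2 \<le> \<theta>\<^sup>2"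
    using assms by (simp add: h_theta_def power2_commute[of "real _"] power_mono)
  also have "\<dots> \<le> \<theta>\<^sup>2 * exp (l * (\<theta> - hamming j))"
    using False assms by simp
  also have "exp (l * (\<theta> - hamming j)) = exp (l * \<theta>) * exp (-l) ^ hamming j"
    by (simp add: algebra_simps flip: exp_of_nat_mult exp_add)
  finally show ?thesis by (simp add: mult.assoc)
qed

lemma sum_sq_dist_h_theta_le:
  assumes "\<theta> \<ge> 0" and "l \<ge> 0"
  shows "(\<Sum>j<2 ^ n. (h_theta \<theta> j - \<theta>)\<^sup>2) \<le> \<theta>\<^sup>2 * exp (l * \<theta>) * (1 + exp (-l)) ^ n"
proof -
  have "(\<Sum>j<2 ^ n. (h_theta \<theta> j - \<theta>)\<^sup>2) \<le> (\<Sum>j<2 ^ n. \<theta>\<^sup>2 * exp (l * \<theta>) * exp (-l) ^ hamming j)"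
    using assms by (intro sum_mono sq_dist_h_theta_le)
  also have "\<dots> = \<theta>\<^sup>2 * exp (l * \<theta>) * (1 + exp (-l)) ^ n"
    by (simp add: sum_power_hamming flip: sum_distrib_left)
  finally show ?thesis .
qed

lemma mean_sq_dist_h_theta_le:
  assumes "0 \<le> \<theta>" and "\<theta> \<le> real n / 2" and "n > 0"
  shows "(\<Sum>j<2 ^ n. (h_theta \<theta> j - \<theta>)\<^sup>2) / 2 ^ n \<le> \<theta>\<^sup>2 * exp (- 2 * (real n / 2 - \<theta>)\<^sup>2 / real n)"
proof -
  define l where "l = 4 * (real n / 2 - \<theta>) / real n"
    \<comment> \<open>minimises the exponent \<open>l * \<theta> + n * (l\<^sup>2 / 8 - l / 2)\<close> below\<close>
  have "l \<ge> 0" using assms by (simp add: l_def)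
  have "(\<Sum>j<2 ^ n. (h_theta \<theta> j - \<theta>)\<^sup>2) / 2 ^ n \<le> \<theta>\<^sup>2 * exp (l * \<theta>) * ((1 + exp (-l)) / 2) ^ n"
    using sum_sq_dist_h_theta_le[OF \<open>0 \<le> \<theta>\<close> \<open>l \<ge> 0\<close>, of n]
    by (simp add: power_divide divide_right_mono)
  also have "\<dots> \<le> \<theta>\<^sup>2 * exp (l * \<theta>) * exp (l\<^sup>2 / 8 - l / 2) ^ n"
    using hoeffding_fair_coin[OF \<open>l \<ge> 0\<close>] by (intro mult_left_mono power_mono) auto
  also have "\<dots> = \<theta>\<^sup>2 * exp (l * \<theta> + real n * (l\<^sup>2 / 8 - l / 2))"
    by (simp add: exp_add flip: exp_of_nat_mult)
  also have "l * \<theta> + real n * (l\<^sup>2 / 8 - l / 2) = - 2 * (real n / 2 - \<theta>)\<^sup>2 / real n"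
    using assms by (simp add: l_def field_simps power2_eq_square)
  finally show ?thesis .
qed

lemma qinner_plus_state_diag:
  "qinner n (plus_state n) (\<lambda>j. complex_of_real (g j) * plus_state n j)
     = complex_of_real ((\<Sum>j<2 ^ n. g j) / 2 ^ n)"
proof -
  have "cnj (plus_state n j) * (complex_of_real (g j) * plus_state n j) = complex_of_real (g j / 2 ^ n)"
    if "j < 2 ^ n" for j
    using that by (simp add: plus_state_def power2_eq_square flip: of_real_mult real_sqrt_mult)
  then show ?thesis
    unfolding qinner_def by (simp add: sum_divide_distrib)
qed

lemma qnorm_proj_perp_plus_state_diag:
  fixes n :: nat and g :: "nat \<Rightarrow> real"
  defines "\<mu> \<equiv> (\<Sum>j<2 ^ n. g j) / 2 ^ n"
  shows "(qnorm n (proj_perp n (plus_state n) (\<lambda>j. complex_of_real (g j) * plus_state n j)))\<^sup>2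
           = (\<Sum>j<2 ^ n. (g j - \<mu>)\<^sup>2) / 2 ^ n"
proof -
  have "qinner n (plus_state n) (plus_state n) = 1"
    using qinner_plus_state_diag[of n "\<lambda>_. 1"] by simp
  then have "proj_perp n (plus_state n) (\<lambda>j. complex_of_real (g j) * plus_state n j)
               = (\<lambda>j. complex_of_real (g j - \<mu>) * plus_state n j)"
    unfolding proj_perp_def qinner_plus_state_diag \<mu>_def by (simp add: algebra_simps)
  then have "(cmod (proj_perp n (plus_state n) (\<lambda>j. complex_of_real (g j) * plus_state n j) j))\<^sup>2
               = (g j - \<mu>)\<^sup>2 / 2 ^ n" if "j < 2 ^ n" for j
    using that by (simp add: plus_state_def norm_divide power_divide flip: of_real_diff)
  then show ?thesis
    unfolding qnorm_def by (simp add: sum_nonneg sum_divide_distrib)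
qed

theorem mainTheorem13:
  fixes n :: nat and \<theta> :: real
  assumes "n \<ge> 1" and "1 \<le> \<theta>" and "\<theta> \<le> real n / 2"
  shows "complex_of_real ((qnorm n (proj_perp n (plus_state n) (H1 \<theta> (plus_state n))))\<^sup>2)
           = qinner n (plus_state n) (H1 \<theta> (H1 \<theta> (plus_state n)))
             - (qinner n (plus_state n) (H1 \<theta> (plus_state n)))\<^sup>2
       \<and> (qnorm n (proj_perp n (plus_state n) (H1 \<theta> (plus_state n))))\<^sup>2
           \<le> 2 * \<theta>\<^sup>2 * exp (- ((real n / 2 - \<theta>)\<^sup>2) / real n)"
proof -
  define f where "f = h_theta \<theta>"
  define Q where "Q = (qnorm n (proj_perp n (plus_state n) (H1 \<theta> (plus_state n))))\<^sup>2"
  have H1_plus: "H1 \<theta> (plus_state n) = (\<lambda>j. complex_of_real (f j) * plus_state n j)"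
    by (simp add: H1_def f_def)
  have H1_H1_plus: "H1 \<theta> (H1 \<theta> (plus_state n)) = (\<lambda>j. complex_of_real ((f j)\<^sup>2) * plus_state n j)"
    by (simp add: H1_def f_def power2_eq_square mult.assoc)
  have Q_var: "Q = (\<Sum>j<2 ^ n. (f j - (\<Sum>i<2 ^ n. f i) / 2 ^ n)\<^sup>2) / 2 ^ n"
    unfolding Q_def H1_plus by (rule qnorm_proj_perp_plus_state_diag)
  have first_moment: "qinner n (plus_state n) (H1 \<theta> (plus_state n)) = complex_of_real ((\<Sum>j<2 ^ n. f j) / 2 ^ n)"
    unfolding H1_plus by (rule qinner_plus_state_diag)
  have second_moment: "qinner n (plus_state n) (H1 \<theta> (H1 \<theta> (plus_state n)))
                         = complex_of_real ((\<Sum>j<2 ^ n. (f j)\<^sup>2) / 2 ^ n)"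
    unfolding H1_H1_plus by (rule qinner_plus_state_diag)
  have "Q = (\<Sum>j<2 ^ n. (f j)\<^sup>2) / 2 ^ n - ((\<Sum>j<2 ^ n. f j) / 2 ^ n)\<^sup>2"
    using sum_sq_dev_mean[of f "{..<2 ^ n}"] unfolding Q_var
    by (simp add: diff_divide_distrib power_divide power2_eq_square)
  then have identity: "complex_of_real Q = qinner n (plus_state n) (H1 \<theta> (H1 \<theta> (plus_state n)))
                                 - (qinner n (plus_state n) (H1 \<theta> (plus_state n)))\<^sup>2"
    unfolding first_moment second_moment by simp
  have "Q \<le> (\<Sum>j<2 ^ n. (f j - \<theta>)\<^sup>2) / 2 ^ n"
    using sum_sq_dev_mean_le[of f "{..<2 ^ n}" \<theta>] unfolding Q_var by (simp add: divide_right_mono)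
  also have "\<dots> \<le> \<theta>\<^sup>2 * exp (- 2 * (real n / 2 - \<theta>)\<^sup>2 / real n)"
    unfolding f_def using assms by (intro mean_sq_dist_h_theta_le) auto
  also have "\<dots> \<le> \<theta>\<^sup>2 * exp (- ((real n / 2 - \<theta>)\<^sup>2) / real n)"
    by (intro mult_left_mono) (simp_all add: divide_right_mono)
  also have "\<dots> \<le> 2 * \<theta>\<^sup>2 * exp (- ((real n / 2 - \<theta>)\<^sup>2) / real n)"
    by simp
  finally show ?thesis
    using identity unfolding Q_def by blast
qed

end
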